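(* Let $\mathcal{G}$ be a multi-layer graph with $l$ layers, $d,s,k\in\mathbb{N}$ with $k\ge1$, and $\mathcal{R}$ a collection of exactly $k$ subsets of $V(\mathcal{G})$. Let $L\subseteq\{1,\dots,l\}$, let $j\in L$ with $j>\max(\{1,\dots,l\}-L)$, and let $U$ be a potential vertex set for $L-\{j\}$, i.e., $U\subseteq V(\mathcal{G})$ with $C^d_S(\mathcal{G})\subseteq U$ for every $S$ with $|S|=s$ that equals $L-\{j\}$ or is a top-down descendant of $L-\{j\}$. If $|U|<\frac1k|\mathsf{Cov}(\mathcal{R})|+|\Delta(\mathcal{R},C^*(\mathcal{R}))|$, then every such $S$ satisfies $|\mathsf{Cov}((\mathcal{R}-\{C^*(\mathcal{R})\})\cup\{C^d_S(\mathcal{G})\})|<(1+\frac1k)|\mathsf{Cov}(\mathcal{R})|$.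
   Context: A multi-layer graph $\mathcal{G}=(V,E_1,\dots,E_l)$ consists of a finite vertex set $V$ and edge sets $E_i$ of simple undirected graphs $G_i=(V,E_i)$. A graph is $d$-dense if every vertex has degree at least $d$; the $d$-coherent core $C^d_L(\mathcal{G})$ is the unique maximal $S\subseteq V$ such that the induced subgraph $G_i[S]$ is $d$-dense for all $i\in L$. Top-down search tree: $L$ is the parent of $L'$ if $L'=L-\{\ell\}$ for some $\ell\in L$ with $\ell>\max(\{1,\dots,l\}-L)$ ($\max(\emptyset)=-\infty$); top-down descendants are obtained by iterating the child relation. For a collection $\mathcal{R}$ of sets, $\mathsf{Cov}(\mathcal{R})=\bigcup_{R\in\mathcal{R}}R$; for $C'\in\mathcal{R}$, $\Delta(\mathcal{R},C')=C'-\mathsf{Cov}(\mathcal{R}-\{C'\})$; $C^*(\mathcal{R})$ is a fixed element of $\mathcal{R}$ minimizing $|\Delta(\mathcal{R},C')|$. *)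

theory Defs
  imports Complex_Main
begin

definition multilayer_graph :: "'a set \<Rightarrow> nat \<Rightarrow> (nat \<Rightarrow> 'a \<Rightarrow> 'a \<Rightarrow> bool) \<Rightarrow> bool" where
  "multilayer_graph V l E \<longleftrightarrow> finite V \<and>
     (\<forall>i\<in>{1..l}. (\<forall>u v. E i u v \<longrightarrow> u \<in> V \<and> v \<in> V) \<and>
                   (\<forall>u v. E i u v \<longrightarrow> E i v u) \<and> (\<forall>u. \<not> E i u u))"

definition dense_induced :: "('a \<Rightarrow> 'a \<Rightarrow> bool) \<Rightarrow> 'a set \<Rightarrow> nat \<Rightarrow> bool" where
  "dense_induced Ei S d \<longleftrightarrow> (\<forall>v\<in>S. card {u\<in>S. Ei v u} \<ge> d)"

definition coherent :: "'a set \<Rightarrow> (nat \<Rightarrow> 'a \<Rightarrow> 'a \<Rightarrow> bool) \<Rightarrow> nat \<Rightarrow> nat set \<Rightarrow> 'a set \<Rightarrow> bool" where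
  "coherent V E d L S \<longleftrightarrow> S \<subseteq> V \<and> (\<forall>i\<in>L. dense_induced (E i) S d)"

definition core :: "'a set \<Rightarrow> (nat \<Rightarrow> 'a \<Rightarrow> 'a \<Rightarrow> bool) \<Rightarrow> nat \<Rightarrow> nat set \<Rightarrow> 'a set" where
  "core V E d L = (THE S. coherent V E d L S \<and> (\<forall>T. coherent V E d L T \<longrightarrow> T \<subseteq> S))"

text \<open>Top-down search tree: td_child l L L' iff L is the parent of L'.
  The condition ell > max({1..l} - L) with max of the empty set = -infinity.\<close>
definition td_child :: "nat \<Rightarrow> nat set \<Rightarrow> nat set \<Rightarrow> bool" where
  "td_child l L L' \<longleftrightarrow> (\<exists>ell\<in>L. L' = L - {ell} \<and> (\<forall>m\<in>{1..l} - L. m < ell))"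

definition td_descendant :: "nat \<Rightarrow> nat set \<Rightarrow> nat set \<Rightarrow> bool" where
  "td_descendant l L L' \<longleftrightarrow> (td_child l)\<^sup>+\<^sup>+ L L'"

definition Cov :: "'a set set \<Rightarrow> 'a set" where
  "Cov R = \<Union>R"

definition Delta :: "'a set set \<Rightarrow> 'a set \<Rightarrow> 'a set" where
  "Delta R C' = C' - Cov (R - {C'})"

end

theory Submission
  imports Defs
begin

text \<open>Removing \<open>C\<^sup>*\<close> from the collection loses exactly the vertices of
  \<open>\<Delta>(\<R>, C\<^sup>*)\<close>, and adding a core contained in \<open>U\<close> gains at most \<open>|U|\<close> vertices.
  Hence the new cover has at most \<open>|Cov \<R>| - |\<Delta>(\<R>, C\<^sup>*)| + |U|\<close> elements, which the
  size bound on \<open>U\<close> turns into the claim.\<close>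

lemma Cov_eq_Cov_remove_Un_Delta:
  assumes "C \<in> R"
  shows "Cov R = Cov (R - {C}) \<union> Delta R C"
  using assms unfolding Cov_def Delta_def by blast

lemma card_Cov_eq_card_Cov_remove_plus_card_Delta:
  assumes "finite (Cov R)" and "C \<in> R"
  shows "card (Cov R) = card (Cov (R - {C})) + card (Delta R C)"
proof -
  have "finite (Cov (R - {C}))" "finite (Delta R C)"
    using assms by (metis Cov_eq_Cov_remove_Un_Delta finite_Un)+
  moreover have "Cov (R - {C}) \<inter> Delta R C = {}"
    unfolding Delta_def by blast
  ultimately show ?thesis
    using assms by (simp add: Cov_eq_Cov_remove_Un_Delta card_Un_disjoint)
qed

lemma card_Cov_replace_le:
  assumes "finite (Cov R)" and "C \<in> R" and "finite U" and "X \<subseteq> U"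
  shows "card (Cov ((R - {C}) \<union> {X})) + card (Delta R C) \<le> card (Cov R) + card U"
proof -
  have fin_rest: "finite (Cov (R - {C}))"
    using assms(1) unfolding Cov_def by (rule finite_subset[rotated]) blast
  have "Cov ((R - {C}) \<union> {X}) \<subseteq> Cov (R - {C}) \<union> U"
    using assms(4) unfolding Cov_def by blast
  then have "card (Cov ((R - {C}) \<union> {X})) \<le> card (Cov (R - {C}) \<union> U)"
    using fin_rest assms(3) by (simp add: card_mono)
  also have "\<dots> \<le> card (Cov (R - {C})) + card U"
    by (rule card_Un_le)
  finally show ?thesis
    using card_Cov_eq_card_Cov_remove_plus_card_Delta[OF assms(1,2)] by linarith
qed

theorem lemma6:
  fixes V :: "'a set" and l :: nat and E :: "nat \<Rightarrow> 'a \<Rightarrow> 'a \<Rightarrow> bool"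
    and d s k :: nat and R :: "'a set set" and Cstar :: "'a set"
    and L :: "nat set" and j :: nat and U :: "'a set"
  assumes G: "multilayer_graph V l E"
    and k: "k \<ge> 1" and R_card: "card R = k" and R_sub: "\<forall>C\<in>R. C \<subseteq> V"
    and Cstar_in: "Cstar \<in> R"
    and Cstar_min: "\<forall>C'\<in>R. card (Delta R Cstar) \<le> card (Delta R C')"
    and L: "L \<subseteq> {1..l}" and j: "j \<in> L" and j_gt: "\<forall>m\<in>{1..l} - L. m < j"
    and U_sub: "U \<subseteq> V"
    and U_pot: "\<forall>S. card S = s \<and> (S = L - {j} \<or> td_descendant l (L - {j}) S)
                    \<longrightarrow> core V E d S \<subseteq> U"
    and small: "real (card U) < real (card (Cov R)) / real k + real (card (Delta R Cstar))"
  shows "\<forall>S. card S = s \<and> (S = L - {j} \<or> td_descendant l (L - {j}) S) \<longrightarrow>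
           real (card (Cov ((R - {Cstar}) \<union> {core V E d S})))
             < (1 + 1 / real k) * real (card (Cov R))"
proof (intro allI impI)
  fix S
  assume "card S = s \<and> (S = L - {j} \<or> td_descendant l (L - {j}) S)"
  then have core_sub: "core V E d S \<subseteq> U"
    using U_pot by blast
  have "finite V"
    using G unfolding multilayer_graph_def by simp
  then have "finite (Cov R)" "finite U"
    using R_sub U_sub unfolding Cov_def by (auto intro: finite_subset)
  then have "card (Cov ((R - {Cstar}) \<union> {core V E d S})) + card (Delta R Cstar)
               \<le> card (Cov R) + card U"
    using card_Cov_replace_le Cstar_in core_sub by blast
  moreover have "(1 + 1 / real k) * real (card (Cov R))
                   = real (card (Cov R)) + real (card (Cov R)) / real k"
    using k by (simp add: field_simps)
  ultimately show "real (card (Cov ((R - {Cstar}) \<union> {core V E d S})))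
                     < (1 + 1 / real k) * real (card (Cov R))"
    using small by linarith
qed

end
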